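(* Let $X$ be a random vector in $\mathbb{R}^n$, let $T=g(X)$ for a deterministic function $g:\mathbb{R}^n\to\mathcal T$, let $f_{\boldsymbol\eta}:\mathbb{R}^n\to\mathbb{R}^m$ be a deterministic function with parameter $\boldsymbol\eta\in\mathbb{R}^d$, let $t>0$, let $Z_t\sim\mathcal N(\mathbf 0,t\mathbf I_m)$ be independent of $X$, and set $Y_t=f_{\boldsymbol\eta}(X)+Z_t$. For $\beta\ge 0$ define the information bottleneck objective $\mathcal L_{\mathrm{IB}}(\boldsymbol\eta)=I(T;Y_t)-\beta I(X;Y_t)$. Let $s_{Y_t}(\mathbf y)=\nabla_{\mathbf y}\log p_{Y_t}(\mathbf y)$ be the unconditional score and $s_{Y_t|T}(\mathbf y|\tau)=\nabla_{\mathbf y}\log p_{Y_t|T}(\mathbf y|\tau)$ the conditional score. Under standard regularity conditions ($f_{\boldsymbol\eta}$ differentiable in $\boldsymbol\eta$, and exchange of differentiation in $\boldsymbol\eta$ with expectation/integration permitted), $$\nabla_{\boldsymbol\eta}\mathcal L_{\mathrm{IB}}(\boldsymbol\eta)=\mathbb{E}_{X,Z_t}\!\left[Df_{\boldsymbol\eta}(X)^\top\big(s_{Y_t|T}(Y_t|T)+(\beta-1)\,s_{Y_t}(Y_t)\big)\right],$$ where $Df_{\boldsymbol\eta}(\mathbf x)\in\mathbb{R}^{m\times d}$ is the Jacobian of $\boldsymbol\eta\mapsto f_{\boldsymbol\eta}(\mathbf x)$.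
   Context: $I(\cdot;\cdot)$ denotes mutual information. The densities $p_{Y_t}$ and $p_{Y_t|T}$ depend on $\boldsymbol\eta$ through $f_{\boldsymbol\eta}$. *)

theory Defs
  imports "HOL-Analysis.Analysis" "HOL-Probability.Probability"
begin

definition iso_gauss_density :: "real \<Rightarrow> real^'m \<Rightarrow> real" where
  "iso_gauss_density t z = (\<Prod>i\<in>UNIV. normal_density 0 (sqrt t) (z $ i))"

definition grad :: "(real^'m \<Rightarrow> real) \<Rightarrow> real^'m \<Rightarrow> real^'m" where
  "grad F y = (\<chi> i. frechet_derivative F (at y) (axis i 1))"

definition score :: "(real^'m \<Rightarrow> real) \<Rightarrow> real^'m \<Rightarrow> real^'m" where
  "score p y = grad (\<lambda>y'. ln (p y')) y"

end

theory Submission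
  imports Defs
begin

(*
  Both informations are differences of expected log-densities: I(T;Y) = E ln q(T,Y) - E ln p(Y),
  and, since the joint density of (X, Y) is the Gaussian density phi of Z evaluated at y - f(x),
  I(X;Y) = E ln phi(Z) - E ln p(Y), whose first term does not depend on the parameter.
  Differentiating E ln P_theta(W_theta) under the integral sign, the chain rule splits the
  integrand into the explicit parameter derivative dP/P, whose expectation is the derivative
  of the total mass 1 and hence vanishes, and the reparametrisation term Df^T (grad ln P)
  coming from Y = f_theta(X) + Z.
*)

lemma has_derivative_compose_partials:
  fixes Q :: "'a::real_normed_vector \<Rightarrow> 'b::real_normed_vector \<Rightarrow> 'c::real_normed_vector"
  assumes Q: "((\<lambda>(\<theta>, y). Q \<theta> y) has_derivative D) (at (\<eta>, G \<eta>))"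
    and G: "(G has_derivative G') (at \<eta>)"
  shows "((\<lambda>\<theta>. Q \<theta> (G \<eta>)) has_derivative (\<lambda>h. D (h, 0))) (at \<eta>)"
    and "(Q \<eta> has_derivative (\<lambda>k. D (0, k))) (at (G \<eta>))"
    and "((\<lambda>\<theta>. Q \<theta> (G \<theta>)) has_derivative (\<lambda>h. D (h, 0) + D (0, G' h))) (at \<eta>)"
proof -
  have Q': "((\<lambda>w. Q (fst w) (snd w)) has_derivative D) (at (\<eta>, G \<eta>))"
    using Q by (simp add: split_beta')
  have "((\<lambda>\<theta>. (\<theta>, G \<eta>)) has_derivative (\<lambda>h. (h, 0))) (at \<eta>)"
    by (auto intro!: derivative_eq_intros)
  from has_derivative_compose[OF this Q'] show "((\<lambda>\<theta>. Q \<theta> (G \<eta>)) has_derivative (\<lambda>h. D (h, 0))) (at \<eta>)"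
    by simp
  have "((\<lambda>y. (\<eta>, y)) has_derivative (\<lambda>k. (0, k))) (at (G \<eta>))"
    by (auto intro!: derivative_eq_intros)
  from has_derivative_compose[OF this Q'] show "(Q \<eta> has_derivative (\<lambda>k. D (0, k))) (at (G \<eta>))"
    by simp
  have "((\<lambda>\<theta>. (\<theta>, G \<theta>)) has_derivative (\<lambda>h. (h, G' h))) (at \<eta>)"
    using G by (auto intro!: derivative_eq_intros)
  from has_derivative_compose[OF this Q']
  have "((\<lambda>\<theta>. Q \<theta> (G \<theta>)) has_derivative (\<lambda>h. D (h, G' h))) (at \<eta>)"
    by simp
  moreover have "D (h, G' h) = D (h, 0) + D (0, G' h)" for h
    using linear_add[OF has_derivative_linear[OF Q], of "(h, 0)" "(0, G' h)"] by simp
  ultimately show "((\<lambda>\<theta>. Q \<theta> (G \<theta>)) has_derivative (\<lambda>h. D (h, 0) + D (0, G' h))) (at \<eta>)"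
    by simp
qed

lemma inner_grad:
  fixes F :: "real^'m \<Rightarrow> real"
  assumes "F differentiable (at y)"
  shows "grad F y \<bullet> k = frechet_derivative F (at y) k"
proof -
  have lin: "linear (frechet_derivative F (at y))"
    using assms frechet_derivative_works has_derivative_linear by blast
  have "k = (\<Sum>i\<in>UNIV. k $ i *\<^sub>R axis i 1)"
    by (simp add: vec_eq_iff axis_def if_distrib cong: if_cong)
  then have "frechet_derivative F (at y) k = frechet_derivative F (at y) (\<Sum>i\<in>UNIV. k $ i *\<^sub>R axis i 1)"
    by simp
  also have "\<dots> = (\<Sum>i\<in>UNIV. k $ i * frechet_derivative F (at y) (axis i 1))"
    by (simp add: linear_sum[OF lin] linear_cmul[OF lin])
  finally show ?thesis
    by (simp add: grad_def inner_vec_def mult.commute)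
qed

lemma inner_transpose_jacobian:
  fixes G :: "real^'d \<Rightarrow> real^'m"
  assumes "(G has_derivative G') (at x)"
  shows "(transpose (jacobian G (at x)) *v s) \<bullet> h = s \<bullet> G' h"
proof -
  have "jacobian G (at x) *v h = G' h"
    unfolding jacobian_def frechet_derivative_at[OF assms, symmetric]
    using has_derivative_linear[OF assms] by (simp add: matrix_works)
  then show ?thesis
    by (metis dot_lmul_matrix transpose_transpose vector_transpose_matrix)
qed

lemma frechet_derivative_ln_compose_shift:
  fixes Q :: "real^'d \<Rightarrow> real^'m \<Rightarrow> real" and G :: "real^'d \<Rightarrow> real^'m"
  assumes Q: "(\<lambda>(\<theta>, y). Q \<theta> y) differentiable (at (\<eta>, G \<eta> + c))"
    and pos: "Q \<eta> (G \<eta> + c) > 0"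
    and G: "G differentiable (at \<eta>)"
  shows "frechet_derivative (\<lambda>\<theta>. ln (Q \<theta> (G \<theta> + c))) (at \<eta>) h =
      frechet_derivative (\<lambda>\<theta>. Q \<theta> (G \<eta> + c)) (at \<eta>) h / Q \<eta> (G \<eta> + c)
      + (transpose (jacobian G (at \<eta>)) *v score (Q \<eta>) (G \<eta> + c)) \<bullet> h"
proof -
  define y0 where "y0 = G \<eta> + c"
  obtain D where D: "((\<lambda>(\<theta>, y). Q \<theta> y) has_derivative D) (at (\<eta>, y0))"
    using Q by (auto simp: differentiable_def y0_def)
  obtain G' where G': "(G has_derivative G') (at \<eta>)"
    using G by (auto simp: differentiable_def)
  have "((\<lambda>\<theta>. G \<theta> + c) has_derivative G') (at \<eta>)"
    using G' by (auto intro!: derivative_eq_intros)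
  note partials = has_derivative_compose_partials[OF D[unfolded y0_def] this, folded y0_def]
  have ln_y0: "((\<lambda>y. ln (Q \<eta> y)) has_derivative (\<lambda>k. D (0, k) / Q \<eta> y0)) (at y0)"
    using partials(2) pos by (auto intro!: derivative_eq_intros simp: y0_def field_simps)
  have ln_path: "((\<lambda>\<theta>. ln (Q \<theta> (G \<theta> + c))) has_derivative (\<lambda>h. (D (h, 0) + D (0, G' h)) / Q \<eta> y0)) (at \<eta>)"
    using partials(3) pos by (auto intro!: derivative_eq_intros simp: y0_def field_simps)
  have score_y0: "score (Q \<eta>) y0 \<bullet> G' h = D (0, G' h) / Q \<eta> y0"
  proof -
    have "score (Q \<eta>) y0 \<bullet> G' h = frechet_derivative (\<lambda>y. ln (Q \<eta> y)) (at y0) (G' h)"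
      unfolding score_def using ln_y0 by (intro inner_grad) (auto simp: differentiable_def)
    then show ?thesis
      by (simp add: frechet_derivative_at[OF ln_y0, symmetric])
  qed
  have "frechet_derivative (\<lambda>\<theta>. ln (Q \<theta> (G \<theta> + c))) (at \<eta>) h = (D (h, 0) + D (0, G' h)) / Q \<eta> y0"
    by (simp add: frechet_derivative_at[OF ln_path, symmetric])
  also have "\<dots> = frechet_derivative (\<lambda>\<theta>. Q \<theta> y0) (at \<eta>) h / Q \<eta> y0 + score (Q \<eta>) y0 \<bullet> G' h"
    by (simp add: frechet_derivative_at[OF partials(1), symmetric] score_y0 add_divide_distrib)
  also have "\<dots> = frechet_derivative (\<lambda>\<theta>. Q \<theta> y0) (at \<eta>) h / Q \<eta> y0
      + (transpose (jacobian G (at \<eta>)) *v score (Q \<eta>) y0) \<bullet> h"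
    by (simp only: inner_transpose_jacobian[OF G'])
  finally show ?thesis
    unfolding y0_def .
qed

lemma expectation_parameter_score_eq_0:
  fixes P :: "'p::real_normed_vector \<Rightarrow> 'c \<Rightarrow> real" and W :: "'p \<Rightarrow> 'a \<Rightarrow> 'c"
  assumes M: "prob_space M"
    and dist: "\<And>\<theta>. distributed M N (W \<theta>) (\<lambda>y. ennreal (P \<theta> y))"
    and pos: "\<And>\<theta> y. P \<theta> y > 0"
    and dP_int: "integrable N (\<lambda>y. frechet_derivative (\<lambda>\<theta>. P \<theta> y) (at \<eta>) h)"
    and P_exchange: "((\<lambda>\<theta>. \<integral>y. P \<theta> y \<partial>N) has_derivative
                 (\<lambda>h. \<integral>y. frechet_derivative (\<lambda>\<theta>. P \<theta> y) (at \<eta>) h \<partial>N)) (at \<eta>)"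
  shows "integrable M (\<lambda>\<omega>. frechet_derivative (\<lambda>\<theta>. P \<theta> (W \<eta> \<omega>)) (at \<eta>) h / P \<eta> (W \<eta> \<omega>))"
    and "(\<integral>\<omega>. frechet_derivative (\<lambda>\<theta>. P \<theta> (W \<eta> \<omega>)) (at \<eta>) h / P \<eta> (W \<eta> \<omega>) \<partial>M) = 0"
proof -
  interpret prob_space M by fact
  define dP where "dP y = frechet_derivative (\<lambda>\<theta>. P \<theta> y) (at \<eta>) h" for y
  have P_nonneg: "0 \<le> P \<theta> y" for \<theta> y
    using pos less_imp_le by blast
  have total_mass: "(\<integral>y. P \<theta> y \<partial>N) = 1" for \<theta>
    using distributed_integral[OF dist[of \<theta>], of "\<lambda>_. 1"] P_nonneg by (simp add: prob_space)
  have "((\<lambda>\<theta>. \<integral>y. P \<theta> y \<partial>N) has_derivative (\<lambda>h. 0)) (at \<eta>)"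
    unfolding total_mass by (rule has_derivative_const)
  then have integral_dP: "(\<integral>y. dP y \<partial>N) = 0"
    using has_derivative_unique[OF P_exchange] unfolding dP_def by metis
  have [measurable]: "P \<eta> \<in> borel_measurable N"
    using distributed_real_measurable[OF _ dist[of \<eta>]] P_nonneg by simp
  have [measurable]: "dP \<in> borel_measurable N"
    using borel_measurable_integrable[OF dP_int] unfolding dP_def .
  have dP_eq: "(\<lambda>y. P \<eta> y * (dP y / P \<eta> y)) = dP"
    using pos by (simp add: fun_eq_iff less_imp_neq[symmetric])
  have "integrable M (\<lambda>\<omega>. dP (W \<eta> \<omega>) / P \<eta> (W \<eta> \<omega>))"
    using distributed_integrable[OF dist[of \<eta>], of "\<lambda>y. dP y / P \<eta> y", unfolded dP_eq]
      dP_int[folded dP_def] P_nonneg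
    by simp
  then show "integrable M (\<lambda>\<omega>. frechet_derivative (\<lambda>\<theta>. P \<theta> (W \<eta> \<omega>)) (at \<eta>) h / P \<eta> (W \<eta> \<omega>))"
    unfolding dP_def .
  have "(\<integral>\<omega>. dP (W \<eta> \<omega>) / P \<eta> (W \<eta> \<omega>) \<partial>M) = 0"
    using distributed_integral[OF dist[of \<eta>], of "\<lambda>y. dP y / P \<eta> y", unfolded dP_eq] integral_dP P_nonneg
    by simp
  then show "(\<integral>\<omega>. frechet_derivative (\<lambda>\<theta>. P \<theta> (W \<eta> \<omega>)) (at \<eta>) h / P \<eta> (W \<eta> \<omega>) \<partial>M) = 0"
    unfolding dP_def .
qed

lemma has_derivative_expectation_ln_density:
  fixes P :: "'p::euclidean_space \<Rightarrow> 'c \<Rightarrow> real" and W :: "'p \<Rightarrow> 'a \<Rightarrow> 'c" and v :: "'a \<Rightarrow> 'p"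
  assumes M: "prob_space M"
    and dist: "\<And>\<theta>. distributed M N (W \<theta>) (\<lambda>y. ennreal (P \<theta> y))"
    and pos: "\<And>\<theta> y. P \<theta> y > 0"
    and dP_int: "\<And>h. integrable N (\<lambda>y. frechet_derivative (\<lambda>\<theta>. P \<theta> y) (at \<eta>) h)"
    and P_exchange: "((\<lambda>\<theta>. \<integral>y. P \<theta> y \<partial>N) has_derivative
                 (\<lambda>h. \<integral>y. frechet_derivative (\<lambda>\<theta>. P \<theta> y) (at \<eta>) h \<partial>N)) (at \<eta>)"
    and dlnP_int: "\<And>h. integrable M (\<lambda>\<omega>. frechet_derivative (\<lambda>\<theta>. ln (P \<theta> (W \<theta> \<omega>))) (at \<eta>) h)"
    and lnP_exchange: "((\<lambda>\<theta>. \<integral>\<omega>. ln (P \<theta> (W \<theta> \<omega>)) \<partial>M) has_derivative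
                 (\<lambda>h. \<integral>\<omega>. frechet_derivative (\<lambda>\<theta>. ln (P \<theta> (W \<theta> \<omega>))) (at \<eta>) h \<partial>M)) (at \<eta>)"
    and pathwise: "\<And>\<omega> h. frechet_derivative (\<lambda>\<theta>. ln (P \<theta> (W \<theta> \<omega>))) (at \<eta>) h =
                 frechet_derivative (\<lambda>\<theta>. P \<theta> (W \<eta> \<omega>)) (at \<eta>) h / P \<eta> (W \<eta> \<omega>) + v \<omega> \<bullet> h"
  shows "integrable M v"
    and "((\<lambda>\<theta>. \<integral>\<omega>. ln (P \<theta> (W \<theta> \<omega>)) \<partial>M) has_derivative (\<lambda>h. integral\<^sup>L M v \<bullet> h)) (at \<eta>)"
proof -
  note score = expectation_parameter_score_eq_0[OF M dist pos dP_int P_exchange]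
  have v_inner: "(\<lambda>\<omega>. v \<omega> \<bullet> h) = (\<lambda>\<omega>. frechet_derivative (\<lambda>\<theta>. ln (P \<theta> (W \<theta> \<omega>))) (at \<eta>) h
      - frechet_derivative (\<lambda>\<theta>. P \<theta> (W \<eta> \<omega>)) (at \<eta>) h / P \<eta> (W \<eta> \<omega>))" for h
    by (simp add: pathwise)
  have v_inner_int: "integrable M (\<lambda>\<omega>. v \<omega> \<bullet> h)" for h
    unfolding v_inner using dlnP_int score(1) by (rule Bochner_Integration.integrable_diff)
  have "integrable M (\<lambda>\<omega>. \<Sum>b\<in>Basis. (v \<omega> \<bullet> b) *\<^sub>R b)"
    using v_inner_int by (intro Bochner_Integration.integrable_sum integrable_scaleR_left) auto
  then show v_int: "integrable M v"
    by (simp add: euclidean_representation)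
  have "integral\<^sup>L M v \<bullet> h = (\<integral>\<omega>. frechet_derivative (\<lambda>\<theta>. ln (P \<theta> (W \<theta> \<omega>))) (at \<eta>) h \<partial>M)" for h
    using integral_inner_left[OF v_int, of h, symmetric]
    unfolding v_inner Bochner_Integration.integral_diff[OF dlnP_int score(1)] score(2) by simp
  with lnP_exchange
  show "((\<lambda>\<theta>. \<integral>\<omega>. ln (P \<theta> (W \<theta> \<omega>)) \<partial>M) has_derivative (\<lambda>h. integral\<^sup>L M v \<bullet> h)) (at \<eta>)"
    by simp
qed

lemma pair_measure_density_snd:
  assumes "g \<in> borel_measurable M2" "sigma_finite_measure M2" "sigma_finite_measure (density M2 g)"
  shows "M1 \<Otimes>\<^sub>M density M2 g = density (M1 \<Otimes>\<^sub>M M2) (\<lambda>x. g (snd x))"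
proof -
  have "M1 \<Otimes>\<^sub>M density M2 g = density M1 (\<lambda>_. 1) \<Otimes>\<^sub>M density M2 g"
    by (simp add: density_1)
  also have "\<dots> = density (M1 \<Otimes>\<^sub>M M2) (\<lambda>(x, y). 1 * g y)"
    using assms by (intro pair_measure_density) auto
  finally show ?thesis
    by (simp add: split_beta')
qed

lemma mutual_information_eq_integral_ln_densities:
  fixes A :: "'a \<Rightarrow> 'b" and Y :: "'a \<Rightarrow> 'y::euclidean_space"
    and p :: "'y \<Rightarrow> real" and r :: "'b \<Rightarrow> 'y \<Rightarrow> real"
  assumes M: "prob_space M"
    and A[measurable]: "A \<in> measurable M SA"
    and p_density: "distributed M lborel Y (\<lambda>y. ennreal (p y))" and p_pos: "\<And>y. p y > 0"
    and r_density: "distributed M (distr M SA A \<Otimes>\<^sub>M lborel) (\<lambda>\<omega>. (A \<omega>, Y \<omega>)) (\<lambda>(a, y). ennreal (r a y))"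
    and r_pos: "\<And>a y. r a y > 0"
    and lnr_int: "integrable M (\<lambda>\<omega>. ln (r (A \<omega>) (Y \<omega>)))"
    and lnp_int: "integrable M (\<lambda>\<omega>. ln (p (Y \<omega>)))"
  shows "prob_space.mutual_information M (exp 1) SA borel A Y =
     (\<integral>\<omega>. ln (r (A \<omega>) (Y \<omega>)) \<partial>M) - (\<integral>\<omega>. ln (p (Y \<omega>)) \<partial>M)"
proof -
  interpret prob_space M by fact
  define N where "N = distr M SA A \<Otimes>\<^sub>M (lborel :: 'y measure)"
  interpret PA: prob_space "distr M SA A" by (rule prob_space_distr) simp
  interpret PN: pair_sigma_finite "distr M SA A" lborel ..
  have r_density': "distributed M N (\<lambda>\<omega>. (A \<omega>, Y \<omega>)) (\<lambda>x. ennreal (r (fst x) (snd x)))"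
    using r_density unfolding N_def by (simp add: split_beta')
  have [measurable]: "Y \<in> borel_measurable M" "p \<in> borel_measurable borel"
    using distributed_measurable[OF p_density] distributed_real_measurable[OF _ p_density] p_pos
    by (auto simp: less_imp_le)
  have r_meas[measurable]: "(\<lambda>x. r (fst x) (snd x)) \<in> borel_measurable N"
    using distributed_real_measurable[OF _ r_density'] r_pos by (simp add: less_imp_le)
  have p_meas[measurable]: "(\<lambda>x. p (snd x)) \<in> borel_measurable N"
    unfolding N_def by measurable
  have PY: "distr M borel Y = density lborel p"
    using distributed_distr_eq_density[OF p_density] by (metis distr_cong sets_lborel)
  have "sigma_finite_measure (density lborel p)"
    unfolding PY[symmetric] by (intro prob_space_imp_sigma_finite prob_space_distr) simp
  then have marginals: "distr M SA A \<Otimes>\<^sub>M distr M borel Y = density N (\<lambda>x. p (snd x))"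
    unfolding PY N_def by (intro pair_measure_density_snd) (auto simp: lborel.sigma_finite_measure_axioms)
  have joint: "distr M (SA \<Otimes>\<^sub>M borel) (\<lambda>\<omega>. (A \<omega>, Y \<omega>)) = density N (\<lambda>x. r (fst x) (snd x))"
    using distributed_distr_eq_density[OF r_density']
    by (metis (no_types, lifting) N_def distr_cong sets_distr sets_lborel sets_pair_measure_cong)
  have "mutual_information (exp 1) SA borel A Y =
     KL_divergence (exp 1) (density N (\<lambda>x. p (snd x))) (density N (\<lambda>x. r (fst x) (snd x)))"
    unfolding mutual_information_def joint marginals ..
  also have "\<dots> = (\<integral>x. r (fst x) (snd x) * log (exp 1) (r (fst x) (snd x) / p (snd x)) \<partial>N)"
    using p_pos r_pos r_meas p_meas PN.sigma_finite_measure_axioms unfolding N_def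
    by (intro sigma_finite_measure.KL_density_density) (auto simp: less_imp_le less_imp_neq[symmetric])
  also have "\<dots> = (\<integral>\<omega>. log (exp 1) (r (A \<omega>) (Y \<omega>) / p (Y \<omega>)) \<partial>M)"
    using r_pos
    by (intro distributed_integral[OF r_density', where g = "\<lambda>x. log (exp 1) (r (fst x) (snd x) / p (snd x))", simplified])
       (auto simp: less_imp_le)
  also have "\<dots> = (\<integral>\<omega>. ln (r (A \<omega>) (Y \<omega>)) - ln (p (Y \<omega>)) \<partial>M)"
    using p_pos r_pos by (simp add: log_def ln_div less_imp_neq[symmetric])
  also have "\<dots> = (\<integral>\<omega>. ln (r (A \<omega>) (Y \<omega>)) \<partial>M) - (\<integral>\<omega>. ln (p (Y \<omega>)) \<partial>M)"
    by (rule Bochner_Integration.integral_diff[OF lnr_int lnp_int])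
  finally show ?thesis .
qed

lemma distr_shear_eq_density:
  fixes F :: "'x \<Rightarrow> 'b::euclidean_space" and \<phi> :: "'b \<Rightarrow> ennreal"
  assumes F[measurable]: "F \<in> borel_measurable PX"
    and \<phi>[measurable]: "\<phi> \<in> borel_measurable borel"
    and \<phi>_sigma_finite: "sigma_finite_measure (density lborel \<phi>)"
  shows "distr (PX \<Otimes>\<^sub>M density lborel \<phi>) (PX \<Otimes>\<^sub>M lborel) (\<lambda>(x, z). (x, F x + z)) =
    density (PX \<Otimes>\<^sub>M lborel) (\<lambda>(x, y). \<phi> (y - F x))"
proof (rule measure_eqI)
  interpret D: sigma_finite_measure "density lborel \<phi>" by (fact \<phi>_sigma_finite)
  define G where "G = (\<lambda>(x, z). (x, F x + z))"
  have G_meas: "G \<in> measurable (PX \<Otimes>\<^sub>M density lborel \<phi>) (PX \<Otimes>\<^sub>M lborel)"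
    unfolding G_def by (simp cong: measurable_cong_sets) measurable
  fix A assume "A \<in> sets (distr (PX \<Otimes>\<^sub>M density lborel \<phi>) (PX \<Otimes>\<^sub>M lborel) (\<lambda>(x, z). (x, F x + z)))"
  then have A[measurable]: "A \<in> sets (PX \<Otimes>\<^sub>M lborel)" "A \<in> sets (PX \<Otimes>\<^sub>M borel)"
    by simp_all
  have shift: "(\<integral>\<^sup>+ z. indicator A (x, F x + z) \<partial>density lborel \<phi>) =
      (\<integral>\<^sup>+ y. \<phi> (y - F x) * indicator A (x, y) \<partial>lborel)" if x: "x \<in> space PX" for x
  proof -
    have "(\<integral>\<^sup>+ z. indicator A (x, F x + z) \<partial>density lborel \<phi>) =
        (\<integral>\<^sup>+ z. \<phi> ((F x + z) - F x) * indicator A (x, F x + z) \<partial>lborel)"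
      using x by (subst nn_integral_density) auto
    also have "\<dots> = (\<integral>\<^sup>+ y. \<phi> (y - F x) * indicator A (x, y) \<partial>distr lborel borel ((+) (F x)))"
      using x by (subst nn_integral_distr) auto
    finally show ?thesis
      by (simp add: lborel_distr_plus)
  qed
  have "emeasure (distr (PX \<Otimes>\<^sub>M density lborel \<phi>) (PX \<Otimes>\<^sub>M lborel) G) A =
      emeasure (PX \<Otimes>\<^sub>M density lborel \<phi>) (G -` A \<inter> space (PX \<Otimes>\<^sub>M density lborel \<phi>))"
    by (rule emeasure_distr[OF G_meas A(1)])
  also have "\<dots> = (\<integral>\<^sup>+ x. \<integral>\<^sup>+ z. indicator A (x, F x + z) \<partial>density lborel \<phi> \<partial>PX)"
    using G_meas
    by (subst D.emeasure_pair_measure)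
       (auto intro!: nn_integral_cong simp: G_def space_pair_measure split: split_indicator)
  also have "\<dots> = (\<integral>\<^sup>+ x. \<integral>\<^sup>+ y. \<phi> (y - F x) * indicator A (x, y) \<partial>lborel \<partial>PX)"
    by (intro nn_integral_cong shift)
  also have "\<dots> = (\<integral>\<^sup>+ w. (\<lambda>(x, y). \<phi> (y - F x)) w * indicator A w \<partial>(PX \<Otimes>\<^sub>M lborel))"
    by (subst lborel.nn_integral_fst[symmetric]) (auto simp: split_beta')
  also have "\<dots> = emeasure (density (PX \<Otimes>\<^sub>M lborel) (\<lambda>(x, y). \<phi> (y - F x))) A"
    by (subst emeasure_density) auto
  finally show "emeasure (distr (PX \<Otimes>\<^sub>M density lborel \<phi>) (PX \<Otimes>\<^sub>M lborel) (\<lambda>(x, z). (x, F x + z))) A =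
      emeasure (density (PX \<Otimes>\<^sub>M lborel) (\<lambda>(x, y). \<phi> (y - F x))) A"
    unfolding G_def .
qed simp

lemma distributed_add_independent_noise:
  fixes X :: "'a \<Rightarrow> 'x::topological_space" and Z :: "'a \<Rightarrow> 'b::euclidean_space"
    and F :: "'x \<Rightarrow> 'b" and \<phi> :: "'b \<Rightarrow> ennreal"
  assumes M: "prob_space M"
    and X[measurable]: "X \<in> borel_measurable M"
    and Z_density: "distributed M lborel Z \<phi>"
    and indep: "distr M (borel \<Otimes>\<^sub>M borel) (\<lambda>\<omega>. (X \<omega>, Z \<omega>)) = distr M borel X \<Otimes>\<^sub>M distr M borel Z"
    and F[measurable]: "F \<in> borel_measurable borel"
  shows "distributed M (distr M borel X \<Otimes>\<^sub>M lborel) (\<lambda>\<omega>. (X \<omega>, F (X \<omega>) + Z \<omega>)) (\<lambda>(x, y). \<phi> (y - F x))"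
proof -
  define N where "N = distr M borel X \<Otimes>\<^sub>M (lborel :: 'b measure)"
  have sets_N: "sets N = sets (borel \<Otimes>\<^sub>M borel)"
    unfolding N_def by (intro sets_pair_measure_cong) auto
  have [measurable]: "Z \<in> borel_measurable M" "\<phi> \<in> borel_measurable borel"
    using distributed_measurable[OF Z_density] distributed_borel_measurable[OF Z_density] by auto
  have PZ: "distr M borel Z = density lborel \<phi>"
    using distributed_distr_eq_density[OF Z_density] by (metis distr_cong sets_lborel)
  have "sigma_finite_measure (density lborel \<phi>)"
    unfolding PZ[symmetric] by (intro prob_space_imp_sigma_finite prob_space.prob_space_distr[OF M]) simp
  note shear = distr_shear_eq_density[of F "distr M borel X", OF _ _ this, folded N_def]
  define G where "G = (\<lambda>(x, z). (x, F x + z :: 'b))"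
  have G_meas: "G \<in> measurable (borel \<Otimes>\<^sub>M borel) N"
    unfolding G_def by (simp add: sets_N cong: measurable_cong_sets) measurable
  have "distr M N (\<lambda>\<omega>. (X \<omega>, F (X \<omega>) + Z \<omega>)) = distr M N (G \<circ> (\<lambda>\<omega>. (X \<omega>, Z \<omega>)))"
    by (simp add: G_def comp_def)
  also have "\<dots> = distr (distr M (borel \<Otimes>\<^sub>M borel) (\<lambda>\<omega>. (X \<omega>, Z \<omega>))) N G"
    using G_meas by (intro distr_distr[symmetric]) auto
  also have "\<dots> = density N (\<lambda>(x, y). \<phi> (y - F x))"
    unfolding indep PZ G_def using shear by (simp cong: distr_cong)
  finally show ?thesis
    unfolding distributed_def N_def[symmetric] using sets_N
    by (auto cong: measurable_cong_sets)
qed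

lemma iso_gauss_density_pos:
  assumes "t > 0"
  shows "iso_gauss_density t z > 0"
  unfolding iso_gauss_density_def using assms by (intro prod_pos) (simp add: normal_density_pos)

lemma ln_iso_gauss_density:
  assumes "t > 0"
  shows "ln (iso_gauss_density t (z :: real^'m)) =
     (\<Sum>j\<in>UNIV. - ((z $ j)\<^sup>2) / (2 * t) - ln (sqrt (2 * pi * t)))"
proof -
  have pos: "0 < normal_density 0 (sqrt t) x" for x
    using assms by (simp add: normal_density_pos)
  have "ln (iso_gauss_density t z) = (\<Sum>j\<in>UNIV. ln (normal_density 0 (sqrt t) (z $ j)))"
    unfolding iso_gauss_density_def by (intro ln_prod) (simp_all add: pos[THEN less_imp_neq, THEN not_sym])
  also have "\<dots> = (\<Sum>j\<in>UNIV. - ((z $ j)\<^sup>2) / (2 * t) - ln (sqrt (2 * pi * t)))"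
    using assms by (intro sum.cong refl) (simp add: normal_density_def ln_mult ln_div)
  finally show ?thesis .
qed

lemma integrable_iso_gauss_density_mult_square:
  assumes t: "t > 0"
  shows "integrable lborel (\<lambda>z::real^'m. iso_gauss_density t z * (z $ i)\<^sup>2)"
proof -
  \<comment> \<open>The integrand factorises over the coordinates, the square sitting in coordinate i,
    so by Tonelli its integral is a product of one-dimensional normal moments.\<close>
  define fb where "fb b s = normal_density 0 (sqrt t) s * (if b = axis i (1::real) then s\<^sup>2 else 1)"
    for b :: "real^'m" and s
  have fb_nonneg: "0 \<le> fb b s" for b s
    unfolding fb_def by simp
  have [measurable]: "fb b \<in> borel_measurable borel" for b
    unfolding fb_def by measurable
  have fb_int: "integrable lborel (fb b)" for b
  proof (cases "b = axis i 1")
    case True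
    have "integrable lborel (\<lambda>x. normal_density 0 (sqrt t) x * (x - 0)\<^sup>2)"
      using t by (intro integrable_normal_moment) simp
    then show ?thesis using True unfolding fb_def by simp
  next
    case False
    then show ?thesis using t unfolding fb_def by simp
  qed
  have Basis_real_vec: "(Basis :: (real^'m) set) = range (\<lambda>j. axis j 1)"
    by (auto simp: Basis_vec_def)
  have product: "(\<Prod>b\<in>Basis. fb b (z \<bullet> b)) = iso_gauss_density t z * (z $ i)\<^sup>2" for z :: "real^'m"
  proof -
    have "(\<Prod>b\<in>Basis. fb b (z \<bullet> b)) = (\<Prod>j\<in>UNIV. fb (axis j 1) (z \<bullet> axis j 1))"
      unfolding Basis_real_vec by (subst prod.reindex) (auto simp: inj_def axis_eq_axis)
    also have "\<dots> = (\<Prod>j\<in>UNIV. normal_density 0 (sqrt t) (z $ j) * (if j = i then (z $ i)\<^sup>2 else 1))"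
      by (intro prod.cong refl) (auto simp: fb_def inner_axis axis_eq_axis)
    finally show ?thesis
      by (simp add: prod.distrib iso_gauss_density_def)
  qed
  have "(\<integral>\<^sup>+ z. ennreal (iso_gauss_density t z * (z $ i)\<^sup>2) \<partial>(lborel :: (real^'m) measure)) =
      (\<integral>\<^sup>+ z. (\<Prod>b\<in>Basis. ennreal (fb b (z \<bullet> b))) \<partial>lborel)"
    by (intro nn_integral_cong) (simp add: product[symmetric] prod_ennreal fb_nonneg)
  also have "\<dots> = (\<Prod>b\<in>(Basis :: (real^'m) set). \<integral>\<^sup>+x. ennreal (fb b x) \<partial>lborel)"
    by (rule nn_integral_lborel_prod) auto
  also have "\<dots> = ennreal (\<Prod>b\<in>(Basis :: (real^'m) set). \<integral>x. fb b x \<partial>lborel)"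
    by (simp add: nn_integral_eq_integral fb_int fb_nonneg prod_ennreal integral_nonneg)
  finally have "(\<integral>\<^sup>+ z. ennreal (iso_gauss_density t z * (z $ i)\<^sup>2) \<partial>(lborel :: (real^'m) measure)) < \<infinity>"
    by simp
  moreover have "0 \<le> iso_gauss_density t z" for z :: "real^'m"
    unfolding iso_gauss_density_def by (simp add: prod_nonneg)
  ultimately show ?thesis
    by (subst integrable_iff_bounded) (auto simp: iso_gauss_density_def)
qed

lemma integrable_ln_iso_gauss_density:
  fixes Z :: "'a \<Rightarrow> real^'m"
  assumes M: "prob_space M" and t: "t > 0"
    and Z_density: "distributed M lborel Z (\<lambda>z. ennreal (iso_gauss_density t z))"
  shows "integrable M (\<lambda>\<omega>. ln (iso_gauss_density t (Z \<omega>)))"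
proof -
  interpret prob_space M by fact
  have square_int: "integrable M (\<lambda>\<omega>. (Z \<omega> $ j)\<^sup>2)" for j
    using distributed_integrable[OF Z_density, of "\<lambda>z. (z $ j)\<^sup>2"]
      integrable_iso_gauss_density_mult_square[OF t, where i = j]
    by (simp add: iso_gauss_density_def prod_nonneg)
  show ?thesis
    unfolding ln_iso_gauss_density[OF t]
    by (intro Bochner_Integration.integrable_sum Bochner_Integration.integrable_diff
        Bochner_Integration.integrable_divide Bochner_Integration.integrable_minus square_int) simp_all
qed

lemma mutual_information_add_independent_noise:
  fixes X :: "'a \<Rightarrow> 'x::topological_space" and Z :: "'a \<Rightarrow> 'b::euclidean_space"
    and F :: "'x \<Rightarrow> 'b" and \<phi> p :: "'b \<Rightarrow> real"
  assumes M: "prob_space M"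
    and X: "X \<in> borel_measurable M"
    and Z_density: "distributed M lborel Z (\<lambda>z. ennreal (\<phi> z))" and \<phi>_pos: "\<And>z. \<phi> z > 0"
    and indep: "distr M (borel \<Otimes>\<^sub>M borel) (\<lambda>\<omega>. (X \<omega>, Z \<omega>)) = distr M borel X \<Otimes>\<^sub>M distr M borel Z"
    and F: "F \<in> borel_measurable borel"
    and p_density: "distributed M lborel (\<lambda>\<omega>. F (X \<omega>) + Z \<omega>) (\<lambda>y. ennreal (p y))"
    and p_pos: "\<And>y. p y > 0"
    and ln\<phi>_int: "integrable M (\<lambda>\<omega>. ln (\<phi> (Z \<omega>)))"
    and lnp_int: "integrable M (\<lambda>\<omega>. ln (p (F (X \<omega>) + Z \<omega>)))"
  shows "prob_space.mutual_information M (exp 1) borel borel X (\<lambda>\<omega>. F (X \<omega>) + Z \<omega>) =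
    (\<integral>\<omega>. ln (\<phi> (Z \<omega>)) \<partial>M) - (\<integral>\<omega>. ln (p (F (X \<omega>) + Z \<omega>)) \<partial>M)"
  using mutual_information_eq_integral_ln_densities[OF M X p_density p_pos
      distributed_add_independent_noise[OF M X Z_density indep F] \<phi>_pos _ lnp_int] ln\<phi>_int
  by simp

theorem proposition4:
  fixes M :: "'a measure"
    and X :: "'a \<Rightarrow> real^'n"
    and Z :: "'a \<Rightarrow> real^'m"
    and S :: "'b measure"
    and g :: "real^'n \<Rightarrow> 'b"
    and f :: "real^'d \<Rightarrow> real^'n \<Rightarrow> real^'m"
    and p :: "real^'d \<Rightarrow> real^'m \<Rightarrow> real"
    and q :: "real^'d \<Rightarrow> 'b \<Rightarrow> real^'m \<Rightarrow> real"
    and t \<beta> :: real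
    and \<eta> :: "real^'d"
  defines "T \<equiv> (\<lambda>\<omega>. g (X \<omega>))"
    and "Y \<equiv> (\<lambda>\<eta>' \<omega>. f \<eta>' (X \<omega>) + Z \<omega>)"
    and "L \<equiv> (\<lambda>\<eta>'. prob_space.mutual_information M (exp 1) S borel (\<lambda>\<omega>. g (X \<omega>))
                       (\<lambda>\<omega>. f \<eta>' (X \<omega>) + Z \<omega>)
                   - \<beta> * prob_space.mutual_information M (exp 1) borel borel X
                       (\<lambda>\<omega>. f \<eta>' (X \<omega>) + Z \<omega>))"
  assumes M: "prob_space M"
    and t_pos: "t > 0"
    and beta_nonneg: "\<beta> \<ge> 0"
    (* X random vector, Z_t ~ N(0, t I_m) independent of X, T = g(X) *)
    and X_rv: "X \<in> borel_measurable M"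
    and Z_gauss: "distributed M lborel Z (\<lambda>z. ennreal (iso_gauss_density t z))"
    and XZ_indep: "distr M (borel \<Otimes>\<^sub>M borel) (\<lambda>\<omega>. (X \<omega>, Z \<omega>)) = distr M borel X \<Otimes>\<^sub>M distr M borel Z"
    and g_meas: "g \<in> measurable borel S"
    (* f_eta deterministic, measurable in x, differentiable in eta *)
    and f_meas: "\<And>\<eta>'. f \<eta>' \<in> borel_measurable borel"
    and f_diff: "\<And>\<eta>' x. (\<lambda>\<theta>. f \<theta> x) differentiable (at \<eta>')"
    (* p(eta,.) is the density of Y_t, q(eta,tau,.) the conditional density of Y_t given T = tau *)
    and p_density: "\<And>\<eta>'. distributed M lborel (Y \<eta>') (\<lambda>y. ennreal (p \<eta>' y))"
    and q_density: "\<And>\<eta>'. distributed M (distr M S T \<Otimes>\<^sub>M lborel) (\<lambda>\<omega>. (T \<omega>, Y \<eta>' \<omega>))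
                         (\<lambda>(\<tau>, y). ennreal (q \<eta>' \<tau> y))"
    (* regularity: positive, smooth versions of the densities *)
    and p_pos: "\<And>\<eta>' y. p \<eta>' y > 0"
    and q_pos: "\<And>\<eta>' \<tau> y. q \<eta>' \<tau> y > 0"
    and p_diff: "\<And>\<eta>' y. (\<lambda>(\<theta>, y'). p \<theta> y') differentiable (at (\<eta>', y))"
    and q_diff: "\<And>\<eta>' \<tau> y. (\<lambda>(\<theta>, y'). q \<theta> \<tau> y') differentiable (at (\<eta>', y))"
    (* regularity: finiteness of the information terms *)
    and lnp_int: "\<And>\<eta>'. integrable M (\<lambda>\<omega>. ln (p \<eta>' (Y \<eta>' \<omega>)))"
    and lnq_int: "\<And>\<eta>'. integrable M (\<lambda>\<omega>. ln (q \<eta>' (T \<omega>) (Y \<eta>' \<omega>)))"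
    (* regularity: exchange of differentiation in eta with expectation / integration *)
    and dp_int: "\<And>\<eta>' h. integrable lborel (\<lambda>y. frechet_derivative (\<lambda>\<theta>. p \<theta> y) (at \<eta>') h)"
    and dq_int: "\<And>\<eta>' h. integrable (distr M S T \<Otimes>\<^sub>M lborel)
                    (\<lambda>(\<tau>, y). frechet_derivative (\<lambda>\<theta>. q \<theta> \<tau> y) (at \<eta>') h)"
    and p_exchange: "\<And>\<eta>'. ((\<lambda>\<theta>. \<integral>y. p \<theta> y \<partial>lborel) has_derivative
                 (\<lambda>h. \<integral>y. frechet_derivative (\<lambda>\<theta>. p \<theta> y) (at \<eta>') h \<partial>lborel)) (at \<eta>')"
    and q_exchange: "\<And>\<eta>'. ((\<lambda>\<theta>. \<integral>(\<tau>, y). q \<theta> \<tau> y \<partial>(distr M S T \<Otimes>\<^sub>M lborel)) has_derivative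
                 (\<lambda>h. \<integral>(\<tau>, y). frechet_derivative (\<lambda>\<theta>. q \<theta> \<tau> y) (at \<eta>') h
                        \<partial>(distr M S T \<Otimes>\<^sub>M lborel))) (at \<eta>')"
    and dlnp_int: "\<And>\<eta>' h. integrable M
                 (\<lambda>\<omega>. frechet_derivative (\<lambda>\<theta>. ln (p \<theta> (Y \<theta> \<omega>))) (at \<eta>') h)"
    and dlnq_int: "\<And>\<eta>' h. integrable M
                 (\<lambda>\<omega>. frechet_derivative (\<lambda>\<theta>. ln (q \<theta> (T \<omega>) (Y \<theta> \<omega>))) (at \<eta>') h)"
    and lnp_exchange: "\<And>\<eta>'. ((\<lambda>\<theta>. \<integral>\<omega>. ln (p \<theta> (Y \<theta> \<omega>)) \<partial>M) has_derivative
                 (\<lambda>h. \<integral>\<omega>. frechet_derivative (\<lambda>\<theta>. ln (p \<theta> (Y \<theta> \<omega>))) (at \<eta>') h \<partial>M)) (at \<eta>')"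
    and lnq_exchange: "\<And>\<eta>'. ((\<lambda>\<theta>. \<integral>\<omega>. ln (q \<theta> (T \<omega>) (Y \<theta> \<omega>)) \<partial>M) has_derivative
                 (\<lambda>h. \<integral>\<omega>. frechet_derivative (\<lambda>\<theta>. ln (q \<theta> (T \<omega>) (Y \<theta> \<omega>))) (at \<eta>') h \<partial>M)) (at \<eta>')"
  shows "(L has_derivative
           (\<lambda>h. (\<integral>\<omega>. transpose (jacobian (\<lambda>\<theta>. f \<theta> (X \<omega>)) (at \<eta>))
                    *v (score (q \<eta> (T \<omega>)) (Y \<eta> \<omega>) + (\<beta> - 1) *\<^sub>R score (p \<eta>) (Y \<eta> \<omega>)) \<partial>M) \<bullet> h))
         (at \<eta>)"
proof -
  interpret prob_space M by (rule M)
  define Vq where "Vq \<omega> = transpose (jacobian (\<lambda>\<theta>. f \<theta> (X \<omega>)) (at \<eta>)) *v score (q \<eta> (T \<omega>)) (Y \<eta> \<omega>)" for \<omega>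
  define Vp where "Vp \<omega> = transpose (jacobian (\<lambda>\<theta>. f \<theta> (X \<omega>)) (at \<eta>)) *v score (p \<eta>) (Y \<eta> \<omega>)" for \<omega>
  define Eq where "Eq \<theta> = (\<integral>\<omega>. ln (q \<theta> (T \<omega>) (Y \<theta> \<omega>)) \<partial>M)" for \<theta>
  define Ep where "Ep \<theta> = (\<integral>\<omega>. ln (p \<theta> (Y \<theta> \<omega>)) \<partial>M)" for \<theta>
  define C where "C = (\<integral>\<omega>. ln (iso_gauss_density t (Z \<omega>)) \<partial>M)"
  have "T \<in> measurable M S"
    unfolding T_def using g_meas X_rv by measurable
  note I_TY = mutual_information_eq_integral_ln_densities[OF M this p_density p_pos q_density q_pos lnq_int lnp_int]
  note I_XY = mutual_information_add_independent_noise[OF M X_rv Z_gauss iso_gauss_density_pos[OF t_pos] XZ_indep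
      f_meas p_density[unfolded Y_def] p_pos integrable_ln_iso_gauss_density[OF M t_pos Z_gauss] lnp_int[unfolded Y_def]]
  have L_eq: "L = (\<lambda>\<theta>. (Eq \<theta> - Ep \<theta>) - \<beta> * (C - Ep \<theta>))"
    using I_TY I_XY unfolding L_def Eq_def Ep_def C_def by (simp add: T_def Y_def)
  have p_path: "frechet_derivative (\<lambda>\<theta>. ln (p \<theta> (Y \<theta> \<omega>))) (at \<eta>) h =
      frechet_derivative (\<lambda>\<theta>. p \<theta> (Y \<eta> \<omega>)) (at \<eta>) h / p \<eta> (Y \<eta> \<omega>) + Vp \<omega> \<bullet> h" for \<omega> h
    unfolding Vp_def Y_def by (rule frechet_derivative_ln_compose_shift[OF p_diff p_pos f_diff])
  have q_path: "frechet_derivative (\<lambda>\<theta>. ln (q \<theta> (T \<omega>) (Y \<theta> \<omega>))) (at \<eta>) h =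
      frechet_derivative (\<lambda>\<theta>. q \<theta> (T \<omega>) (Y \<eta> \<omega>)) (at \<eta>) h / q \<eta> (T \<omega>) (Y \<eta> \<omega>) + Vq \<omega> \<bullet> h" for \<omega> h
    unfolding Vq_def Y_def by (rule frechet_derivative_ln_compose_shift[where Q = "\<lambda>\<theta>. q \<theta> (T \<omega>)", OF q_diff q_pos f_diff])
  note p_deriv = has_derivative_expectation_ln_density[OF M p_density p_pos dp_int p_exchange dlnp_int lnp_exchange p_path]
  note q_deriv = has_derivative_expectation_ln_density[where N = "distr M S T \<Otimes>\<^sub>M lborel"
      and P = "\<lambda>\<theta> (\<tau>, y). q \<theta> \<tau> y" and W = "\<lambda>\<theta> \<omega>. (T \<omega>, Y \<theta> \<omega>)" and v = Vq, unfolded split_beta' fst_conv snd_conv,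
      OF M q_density[unfolded split_beta'] q_pos dq_int[unfolded split_beta'] q_exchange[unfolded split_beta']
      dlnq_int lnq_exchange q_path]
  have "((\<lambda>\<theta>. (Eq \<theta> - Ep \<theta>) - \<beta> * (C - Ep \<theta>)) has_derivative
      (\<lambda>h. (integral\<^sup>L M Vq \<bullet> h - integral\<^sup>L M Vp \<bullet> h) - \<beta> * (0 - integral\<^sup>L M Vp \<bullet> h))) (at \<eta>)"
    unfolding Eq_def Ep_def
    by (intro has_derivative_diff has_derivative_mult_right has_derivative_const p_deriv(2) q_deriv(2))
  also have "(\<lambda>h. (integral\<^sup>L M Vq \<bullet> h - integral\<^sup>L M Vp \<bullet> h) - \<beta> * (0 - integral\<^sup>L M Vp \<bullet> h)) =
      (\<lambda>h. (integral\<^sup>L M Vq + (\<beta> - 1) *\<^sub>R integral\<^sup>L M Vp) \<bullet> h)"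
    by (simp add: fun_eq_iff algebra_simps)
  also have "integral\<^sup>L M Vq + (\<beta> - 1) *\<^sub>R integral\<^sup>L M Vp = (\<integral>\<omega>. Vq \<omega> + (\<beta> - 1) *\<^sub>R Vp \<omega> \<partial>M)"
    using p_deriv(1) q_deriv(1) by simp
  also have "(\<lambda>\<omega>. Vq \<omega> + (\<beta> - 1) *\<^sub>R Vp \<omega>) = (\<lambda>\<omega>. transpose (jacobian (\<lambda>\<theta>. f \<theta> (X \<omega>)) (at \<eta>))
      *v (score (q \<eta> (T \<omega>)) (Y \<eta> \<omega>) + (\<beta> - 1) *\<^sub>R score (p \<eta>) (Y \<eta> \<omega>)))"
    unfolding Vq_def Vp_def by (simp add: matrix_vector_right_distrib matrix_vector_mult_scaleR)
  finally show ?thesis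
    unfolding L_eq .
qed

end
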